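(* Let $(N,\langle\cdot,\cdot\rangle)$ be a 2-step nilpotent Lie group with a left-invariant Riemannian metric and Lie algebra $\mathfrak n$. Suppose that either $\mathfrak n$ is non-singular, or $\mathfrak n$ has no Euclidean factor (i.e. $\ker j=\{0\}$) and is almost non-singular. Then every left-invariant skew-symmetric $(1,1)$-tensor $F$ on $N$ of type I whose associated 2-form $\omega=\langle F\cdot,\cdot\rangle$ is closed and which is parallel ($\nabla F=0$, $\nabla$ the Levi-Civita connection) is identically zero.
   Context: A real Lie algebra is 2-step nilpotent if $[[U,V],W]=0$ for all $U,V,W$. Let $\mathfrak z$ be the center, $\mathfrak v=\mathfrak z^\perp$, and for $Z\in\mathfrak z$ define $j_Z:\mathfrak v\to\mathfrak v$ by $\langle j_ZV,W\rangle=\langle Z,[V,W]\rangle$; $j:\mathfrak z\to\mathfrak{so}(\mathfrak v)$ is linear with kernel $\ker j$. $\mathfrak n$ is non-singular if $\mathrm{ad}(X):\mathfrak n\to\mathfrak z$ is onto for every $X\notin\mathfrak z$ (equivalently $j_Z$ is invertible for every $Z\neq0$); it is almost non-singular if there exist $Z,\tilde Z\in\mathfrak z$ with $j_Z$ invertible and $j_{\tilde Z}$ singular. $F$ (identified with a skew-symmetric endomorphism of $\mathfrak n$) is of type I if $F(\mathfrak v)\subseteq\mathfrak v$ and $F(\mathfrak z)\subseteq\mathfrak z$. Closedness of a left-invariant 2-form means $\omega([U,V],W)+\omega([V,W],U)+\omega([W,U],V)=0$ for all $U,V,W\in\mathfrak n$. *)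

theory Defs
  imports "HOL-Analysis.Analysis"
begin

text \<open>A metric Lie algebra is modelled as a Euclidean space (finite-dimensional real
inner product space) with a bracket br.\<close>

definition two_step_nilpotent :: "('a::euclidean_space \<Rightarrow> 'a \<Rightarrow> 'a) \<Rightarrow> bool" where
  "two_step_nilpotent br \<longleftrightarrow>
     bilinear br \<and> (\<forall>U V. br U V = - br V U) \<and>
     (\<forall>U V W. br (br U V) W = 0) \<and> (\<exists>U V. br U V \<noteq> 0)"

definition center :: "('a::euclidean_space \<Rightarrow> 'a \<Rightarrow> 'a) \<Rightarrow> 'a set" where
  "center br = {Z. \<forall>X. br Z X = 0}"

definition vpart :: "('a::euclidean_space \<Rightarrow> 'a \<Rightarrow> 'a) \<Rightarrow> 'a set" where
  "vpart br = {V. \<forall>Z\<in>center br. inner V Z = 0}"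

text \<open>j_Z V is the vector with inner (j_Z V) W = inner Z (br V W) for all W.\<close>
definition jmap :: "('a::euclidean_space \<Rightarrow> 'a \<Rightarrow> 'a) \<Rightarrow> 'a \<Rightarrow> 'a \<Rightarrow> 'a" where
  "jmap br Z V = (\<Sum>b\<in>Basis. inner Z (br V b) *\<^sub>R b)"

definition non_singular :: "('a::euclidean_space \<Rightarrow> 'a \<Rightarrow> 'a) \<Rightarrow> bool" where
  "non_singular br \<longleftrightarrow> (\<forall>X. X \<notin> center br \<longrightarrow> center br \<subseteq> range (br X))"

definition almost_non_singular :: "('a::euclidean_space \<Rightarrow> 'a \<Rightarrow> 'a) \<Rightarrow> bool" where
  "almost_non_singular br \<longleftrightarrow>
     (\<exists>Z\<in>center br. \<exists>Z'\<in>center br.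
        bij_betw (jmap br Z) (vpart br) (vpart br) \<and>
        \<not> bij_betw (jmap br Z') (vpart br) (vpart br))"

definition no_euclidean_factor :: "('a::euclidean_space \<Rightarrow> 'a \<Rightarrow> 'a) \<Rightarrow> bool" where
  "no_euclidean_factor br \<longleftrightarrow>
     (\<forall>Z\<in>center br. (\<forall>V\<in>vpart br. jmap br Z V = 0) \<longrightarrow> Z = 0)"

text \<open>Levi-Civita connection on left-invariant vector fields (Koszul formula).\<close>
definition lc_conn :: "('a::euclidean_space \<Rightarrow> 'a \<Rightarrow> 'a) \<Rightarrow> 'a \<Rightarrow> 'a \<Rightarrow> 'a" where
  "lc_conn br X Y = (\<Sum>b\<in>Basis.
      ((inner (br X Y) b - inner (br Y b) X + inner (br b X) Y) / 2) *\<^sub>R b)"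

definition skew_endo :: "('a::euclidean_space \<Rightarrow> 'a) \<Rightarrow> bool" where
  "skew_endo F \<longleftrightarrow> linear F \<and> (\<forall>X Y. inner (F X) Y = - inner X (F Y))"

definition type_I :: "('a::euclidean_space \<Rightarrow> 'a \<Rightarrow> 'a) \<Rightarrow> ('a \<Rightarrow> 'a) \<Rightarrow> bool" where
  "type_I br F \<longleftrightarrow> F ` vpart br \<subseteq> vpart br \<and> F ` center br \<subseteq> center br"

definition closed_form :: "('a::euclidean_space \<Rightarrow> 'a \<Rightarrow> 'a) \<Rightarrow> ('a \<Rightarrow> 'a \<Rightarrow> real) \<Rightarrow> bool" where
  "closed_form br \<omega> \<longleftrightarrow>
     (\<forall>U V W. \<omega> (br U V) W + \<omega> (br V W) U + \<omega> (br W U) V = 0)"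

definition parallel :: "('a::euclidean_space \<Rightarrow> 'a \<Rightarrow> 'a) \<Rightarrow> ('a \<Rightarrow> 'a) \<Rightarrow> bool" where
  "parallel br F \<longleftrightarrow> (\<forall>X Y. lc_conn br X (F Y) - F (lc_conn br X Y) = 0)"

end

theory Submission
  imports Defs
begin

(* Closedness of \<omega>, tested against the central vector F[U,V], forces F to kill the derived
   algebra [n,n].  Feeding this into the Koszul form of \<nabla>F = 0 shows first that F takes values
   in the centre and then that these values are orthogonal to [n,n].  A central vector
   orthogonal to [n,n] lies in ker j, which is zero when n has no Euclidean factor, while
   non-singularity gives [n,n] = z outright; in both cases F = 0. *)

lemma two_step_nilpotentD:
  assumes "two_step_nilpotent br"
  shows "bilinear br" "br U V = - br V U" "br (br U V) W = 0"
  using assms unfolding two_step_nilpotent_def by blast+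

lemma center_bracket_left [simp]: "Z \<in> center br \<Longrightarrow> br Z X = 0"
  unfolding center_def by blast

lemma center_bracket_right:
  assumes "two_step_nilpotent br" "Z \<in> center br"
  shows "br X Z = 0"
  using two_step_nilpotentD(2)[OF assms(1), of X Z] assms(2) by simp

lemma bracket_in_center: "two_step_nilpotent br \<Longrightarrow> br U V \<in> center br"
  unfolding center_def by (simp add: two_step_nilpotentD(3))

lemma inner_lc_conn:
  fixes br :: "'a::euclidean_space \<Rightarrow> 'a \<Rightarrow> 'a"
  assumes "bilinear br"
  shows "inner (lc_conn br X Y) W =
     (inner (br X Y) W - inner (br Y W) X + inner (br W X) Y) / 2"
proof -
  define g where "g b = (inner (br X Y) b - inner (br Y b) X + inner (br b X) Y) / 2" for b
  have "linear (br Y)" "linear (\<lambda>b. br b X)"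
    using assms unfolding bilinear_def by auto
  then have lin: "linear g"
    unfolding linear_iff g_def
    by (auto simp: inner_add_left inner_add_right algebra_simps add_divide_distrib diff_divide_distrib)
  have "inner (lc_conn br X Y) W = (\<Sum>b\<in>Basis. g b * inner b W)"
    unfolding lc_conn_def g_def by (simp add: inner_sum_left)
  also have "\<dots> = (\<Sum>b\<in>Basis. inner W b * g b)"
    by (simp add: inner_commute mult.commute)
  also have "\<dots> = g (\<Sum>b\<in>Basis. inner W b *\<^sub>R b)"
    by (simp add: linear_sum[OF lin] linear_scale[OF lin])
  also have "\<dots> = g W" by (simp add: euclidean_representation)
  finally show ?thesis by (simp add: g_def)
qed

locale parallel_closed_skew_endo =
  fixes br :: "'a::euclidean_space \<Rightarrow> 'a \<Rightarrow> 'a" and F :: "'a \<Rightarrow> 'a"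
  assumes nilpotent: "two_step_nilpotent br"
    and skew: "skew_endo F"
    and center_invariant: "F ` center br \<subseteq> center br"
    and closed: "closed_form br (\<lambda>U V. inner (F U) V)"
    and parallel: "parallel br F"
begin

lemma F_zero [simp]: "F 0 = 0"
  using skew unfolding skew_endo_def by (simp add: linear_0)

lemma inner_F_swap: "inner (F X) Y = - inner X (F Y)"
  using skew unfolding skew_endo_def by blast

lemmas [simp] =
  center_bracket_right[OF nilpotent] bracket_in_center[OF nilpotent]
  bilinear_lzero[OF two_step_nilpotentD(1)[OF nilpotent]]
  bilinear_rzero[OF two_step_nilpotentD(1)[OF nilpotent]]

lemma koszul_parallel:
  "inner (br X (F Y)) W - inner (br (F Y) W) X + inner (br W X) (F Y)
     = - (inner (br X Y) (F W) - inner (br Y (F W)) X + inner (br (F W) X) Y)"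
proof -
  have "inner (lc_conn br X (F Y)) W = inner (F (lc_conn br X Y)) W"
    using parallel unfolding parallel_def by simp
  also have "\<dots> = - inner (lc_conn br X Y) (F W)"
    by (rule inner_F_swap)
  finally show ?thesis
    by (simp add: inner_lc_conn[OF two_step_nilpotentD(1)[OF nilpotent]] field_simps)
qed

lemma F_bracket [simp]: "F (br U V) = 0"
proof -
  let ?W = "F (br U V)"
  have W: "?W \<in> center br"
    using center_invariant bracket_in_center[OF nilpotent, of U V] by blast
  have "inner ?W ?W + inner (F (br V ?W)) U + inner (F (br ?W U)) V = 0"
    using closed unfolding closed_form_def by blast
  moreover have "br V ?W = 0" "br ?W U = 0"
    using W by simp_all
  ultimately have "inner ?W ?W = 0" by simp
  then show ?thesis by simp
qed

lemma F_in_center: "F Y \<in> center br"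
proof -
  have right: "br X (F Y) = 0" for X
  proof -
    have "inner (br X (F Y)) (br X (F Y)) = - inner (br X Y) (F (br X (F Y)))"
      using koszul_parallel[of X Y "br X (F Y)"] by simp
    then show ?thesis by simp
  qed
  have "br (F Y) X = 0" for X
    using two_step_nilpotentD(2)[OF nilpotent, of "F Y" X] right[of X] by simp
  then show ?thesis
    unfolding center_def by blast
qed

lemma bracket_orthogonal_F: "inner (br U V) (F Y) = 0"
proof -
  have "inner (br V Y) (F U) = 0"
    using inner_F_swap[of "br V Y" U] by simp
  then show ?thesis
    using koszul_parallel[of V Y U] F_in_center by simp
qed

end

lemma central_orthogonal_brackets_zero_if_non_singular:
  assumes "two_step_nilpotent br" "non_singular br" "Z \<in> center br"
    and "\<And>U V. inner (br U V) Z = 0"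
  shows "Z = 0"
proof -
  obtain U V where "br U V \<noteq> 0"
    using assms(1) unfolding two_step_nilpotent_def by blast
  then have "U \<notin> center br" by auto
  with assms(2,3) obtain T where "Z = br U T"
    unfolding non_singular_def by blast
  with assms(4)[of U T] show ?thesis by simp
qed

lemma central_orthogonal_brackets_zero_if_no_euclidean_factor:
  assumes "no_euclidean_factor br" "Z \<in> center br"
    and "\<And>U V. inner (br U V) Z = 0"
  shows "Z = 0"
proof -
  have "jmap br Z V = 0" for V
    unfolding jmap_def using assms(3) by (simp add: inner_commute)
  with assms(1,2) show ?thesis
    unfolding no_euclidean_factor_def by blast
qed

theorem mainTheorem5:
  fixes br :: "'a::euclidean_space \<Rightarrow> 'a \<Rightarrow> 'a" and F :: "'a \<Rightarrow> 'a"
  assumes "two_step_nilpotent br"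
    and "non_singular br \<or> (no_euclidean_factor br \<and> almost_non_singular br)"
    and "skew_endo F"
    and "type_I br F"
    and "closed_form br (\<lambda>U V. inner (F U) V)"
    and "parallel br F"
  shows "F = (\<lambda>X. 0)"
proof -
  interpret parallel_closed_skew_endo br F
  proof
    show "F ` center br \<subseteq> center br"
      using assms(4) unfolding type_I_def by blast
  qed (fact assms)+
  have "F Y = 0" for Y
    using assms(2)
  proof
    assume "non_singular br"
    with assms(1) show ?thesis
      using F_in_center bracket_orthogonal_F
      by (rule central_orthogonal_brackets_zero_if_non_singular)
  next
    assume "no_euclidean_factor br \<and> almost_non_singular br"
    then show ?thesis
      using F_in_center bracket_orthogonal_F
      by (blast intro: central_orthogonal_brackets_zero_if_no_euclidean_factor)
  qed
  then show ?thesis by (simp add: fun_eq_iff)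
qed

end
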